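(* For any discrete random variable $X$, there exists a conditional distribution $p_{W|X}$ such that the resulting random variable $W$ has marginal distribution $\mathrm{Geom}(1/2)$ (i.e., $\mathbb{P}(W=w)=2^{-w}$ for $w=1,2,\dots$), and the conditional distribution $p_{X|W=w}$ is a dyadic distribution for all $w\ge1$.
   Context: A dyadic distribution is a probability distribution $p$ on a discrete set in which each nonzero probability $p(x)$ is an integer power of two. *)

theory Defs
  imports "HOL-Probability.Probability"
begin

definition dyadic_pmf :: "'a pmf \<Rightarrow> bool" where
  "dyadic_pmf d \<longleftrightarrow> (\<forall>x \<in> set_pmf d. \<exists>k::int. pmf d x = 2 powi k)"

text \<open>Joint distribution of (X, W) from the law of X and a channel K = p_{W|X}.\<close>
definition joint_pmf :: "'a pmf \<Rightarrow> ('a \<Rightarrow> nat pmf) \<Rightarrow> ('a \<times> nat) pmf" where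
  "joint_pmf p K = bind_pmf p (\<lambda>x. map_pmf (\<lambda>w. (x, w)) (K x))"

definition cond_X_given_W :: "('a \<times> nat) pmf \<Rightarrow> nat \<Rightarrow> 'a pmf" where
  "cond_X_given_W q w = map_pmf fst (cond_pmf q {z. snd z = w})"

end

theory Submission
  imports Defs
begin

(* Split p into pieces S 0, S 1, ... where S n has total mass 2^-(n+1) and each value S n x
   is 0 or a power of 1/2, and let W = n + 1 with probability S n x / p x given X = x.  Then W
   is Geom(1/2) and p_{X|W=n+1} = 2^(n+1) S n is dyadic.
   The pieces are peeled off greedily: weights of total mass 2^-m dominate a dyadic family of
   mass exactly 2^-(m+1).  Rounding each weight down to a power of 1/2 keeps more than half of
   it, so finitely many rounded weights already reach 2^-(m+1); and powers of two that all
   divide a target and sum to at least it contain a subfamily summing to it exactly. *)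

lemma subset_sum_eq_pow2:
  fixes e :: "'a \<Rightarrow> nat" and T :: nat
  assumes "finite F" and "\<And>x. x \<in> F \<Longrightarrow> 2 ^ e x dvd T" and "T \<le> (\<Sum>x\<in>F. 2 ^ e x)"
  shows "\<exists>G\<subseteq>F. (\<Sum>x\<in>G. 2 ^ e x) = T"
  using assms
proof (induction F arbitrary: T rule: finite_remove_induct)
  case empty
  then show ?case by auto
next
  case (remove F)
  obtain x where x: "x \<in> F" "\<And>y. y \<in> F \<Longrightarrow> e y \<le> e x"
    using Max_in[of "e ` F"] Max_ge[of "e ` F"] remove.hyps by fastforce
  show ?case
  proof (cases "2 ^ e x \<le> T")
    case True
    \<comment> \<open>the largest power divides all others, so it can be taken greedily\<close>
    have "\<exists>G\<subseteq>F - {x}. (\<Sum>y\<in>G. 2 ^ e y) = T - 2 ^ e x"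
    proof (rule remove.IH)
      show "2 ^ e y dvd T - 2 ^ e x" if "y \<in> F - {x}" for y
        using that x remove.prems(1) by (intro dvd_diff_nat le_imp_power_dvd) auto
      show "T - 2 ^ e x \<le> (\<Sum>y\<in>F - {x}. 2 ^ e y)"
        using remove.prems(2) sum.remove[OF remove.hyps(1) x(1), of "\<lambda>y. 2 ^ e y :: nat"] by linarith
    qed (use x in auto)
    then obtain G where G: "G \<subseteq> F - {x}" "(\<Sum>y\<in>G. 2 ^ e y) = T - 2 ^ e x" by blast
    have "finite G" "x \<notin> G" using G remove.hyps(1) finite_subset by blast+
    then have "(\<Sum>y\<in>insert x G. 2 ^ e y) = T" using G True by simp
    then show ?thesis using G x(1) by blast
  next
    case False
    then have "T = 0" using remove.prems(1)[OF x(1)] dvd_imp_le by fastforce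
    then show ?thesis by auto
  qed
qed

lemma subset_sum_eq_half_power:
  fixes n :: "'a \<Rightarrow> nat"
  assumes "finite F" and "\<And>x. x \<in> F \<Longrightarrow> m \<le> n x"
    and "(1/2) ^ m \<le> (\<Sum>x\<in>F. (1/2::real) ^ n x)"
  shows "\<exists>G\<subseteq>F. (\<Sum>x\<in>G. (1/2::real) ^ n x) = (1/2) ^ m"
proof -
  define N where "N = Max (insert m (n ` F))"
  have N: "m \<le> N" "\<And>x. x \<in> F \<Longrightarrow> n x \<le> N"
    using assms(1) by (auto simp: N_def)
  have half_power: "(1/2::real) ^ k = 2 ^ (N - k) / 2 ^ N" if "k \<le> N" for k
  proof -
    have "(2::real) ^ N = 2 ^ (N - k) * 2 ^ k" using that by (simp flip: power_add)
    then show ?thesis by (simp add: power_one_over)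
  qed
  have "\<exists>G\<subseteq>F. (\<Sum>x\<in>G. 2 ^ (N - n x)) = (2::nat) ^ (N - m)"
  proof (rule subset_sum_eq_pow2[OF assms(1)])
    show "2 ^ (N - n x) dvd (2::nat) ^ (N - m)" if "x \<in> F" for x
      using that assms(2)[OF that] by (intro le_imp_power_dvd) (simp add: diff_le_mono2)
    have "real (2 ^ (N - m)) = 2 ^ N * (1/2) ^ m"
      using N(1) by (simp add: half_power)
    also have "\<dots> \<le> 2 ^ N * (\<Sum>x\<in>F. (1/2) ^ n x)"
      using assms(3) by simp
    also have "\<dots> = real (\<Sum>x\<in>F. 2 ^ (N - n x))"
      using N(2) by (simp add: sum_distrib_left half_power)
    finally show "(2::nat) ^ (N - m) \<le> (\<Sum>x\<in>F. 2 ^ (N - n x))"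
      by linarith
  qed
  then obtain G where G: "G \<subseteq> F" "(\<Sum>x\<in>G. 2 ^ (N - n x)) = (2::nat) ^ (N - m)"
    by blast
  have "(\<Sum>x\<in>G. (1/2::real) ^ n x) = (\<Sum>x\<in>G. 2 ^ (N - n x)) / 2 ^ N"
    unfolding sum_divide_distrib using G(1) N(2) by (intro sum.cong) (auto simp: half_power)
  also have "\<dots> = 2 ^ (N - m) / 2 ^ N"
    using arg_cong[OF G(2), of real] by simp
  also have "\<dots> = (1/2) ^ m"
    using N(1) by (simp add: half_power)
  finally show ?thesis using G(1) by blast
qed

lemma exists_half_power_between:
  fixes r :: real
  assumes "0 < r" "r < 1"
  shows "\<exists>n. (1/2) ^ Suc n \<le> r \<and> r < (1/2) ^ n"
proof -
  define n where "n = (LEAST n. (1/2::real) ^ Suc n \<le> r)"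
  obtain k where "(1/2::real) ^ k < r"
    using real_arch_pow_inv[OF assms(1), of "1/2"] by auto
  then have "(1/2::real) ^ Suc k \<le> r"
    using power_decreasing[of k "Suc k" "1/2::real"] by linarith
  then have "\<exists>n. (1/2::real) ^ Suc n \<le> r" ..
  then have "(1/2) ^ Suc n \<le> r"
    unfolding n_def by (rule LeastI_ex)
  moreover have "r < (1/2) ^ n"
  proof (cases n)
    case (Suc k)
    then have "\<not> (1/2::real) ^ Suc k \<le> r"
      using not_less_Least[of k "\<lambda>n. (1/2::real) ^ Suc n \<le> r"] by (simp add: n_def)
    then show ?thesis using Suc by simp
  qed (use assms(2) in simp)
  ultimately show ?thesis by blast
qed

definition zero_or_half_power :: "real \<Rightarrow> bool" where
  "zero_or_half_power v \<longleftrightarrow> v = 0 \<or> (\<exists>k. v = (1/2) ^ k)"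

lemma zero_or_half_power_0 [simp]: "zero_or_half_power 0"
  and zero_or_half_power_power [simp]: "zero_or_half_power ((1/2) ^ k)"
  by (auto simp: zero_or_half_power_def)

lemma zero_or_half_power_nonneg: "zero_or_half_power v \<Longrightarrow> 0 \<le> v"
  by (auto simp: zero_or_half_power_def)

lemma exists_finite_sum_ge_half_mass:
  fixes r h :: "'a \<Rightarrow> real"
  assumes nonneg: "\<And>x. 0 \<le> r x" and sum: "(r has_sum a) UNIV" and "a \<noteq> 0"
    and h_le: "\<And>x. h x \<le> r x" and h_ge: "\<And>x. r x / 2 \<le> h x"
    and h_gt: "\<And>x. 0 < r x \<Longrightarrow> r x / 2 < h x"
  shows "\<exists>F. finite F \<and> a / 2 \<le> sum h F"
proof -
  obtain x0 where x0: "0 < r x0"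
    using has_sum_unique[OF sum has_sum_0[of UNIV r]] nonneg \<open>a \<noteq> 0\<close> by (force simp: le_less)
  have "0 \<le> h x" for x
    using h_ge[of x] nonneg[of x] by linarith
  then have "h summable_on UNIV"
    using summable_on_comparison_test[OF has_sum_imp_summable[OF sum]] h_le by blast
  then obtain H where H: "(h has_sum H) UNIV"
    using summable_on_def by blast
  have "a / 2 < H"
  proof (rule has_sum_strict_mono)
    show "((\<lambda>x. r x / 2) has_sum a / 2) UNIV"
      using has_sum_divide_const[OF sum] .
  qed (use H h_ge h_gt[OF x0] in auto)
  then obtain F where "finite F" "dist (sum h F) H \<le> H - a / 2"
    using has_sum_finite_approximation[OF H, of "H - a / 2"] by auto
  then show ?thesis by (auto simp: dist_real_def)
qed

lemma exists_finite_half_power_minorant: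
  fixes r :: "'a \<Rightarrow> real"
  assumes nonneg: "\<And>x. 0 \<le> r x" and sum: "(r has_sum (1/2) ^ m) UNIV"
    and small: "\<And>x. r x < (1/2) ^ Suc m"
  shows "\<exists>F n. finite F \<and> (\<forall>x\<in>F. (1/2) ^ n x \<le> r x \<and> Suc m \<le> n x)
           \<and> (1/2) ^ Suc m \<le> (\<Sum>x\<in>F. (1/2::real) ^ n x)"
proof -
  have "\<exists>k. 0 < r x \<longrightarrow> (1/2) ^ Suc k \<le> r x \<and> r x < (1/2) ^ k" for x
  proof -
    have "r x < 1" using small[of x] power_le_one[of "1/2::real" "Suc m"] by linarith
    then show ?thesis using exists_half_power_between[of "r x"] by blast
  qed
  then obtain k where k: "\<And>x. 0 < r x \<Longrightarrow> (1/2) ^ Suc (k x) \<le> r x \<and> r x < (1/2) ^ k x"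
    by metis
  define h where "h x = (if 0 < r x then (1/2::real) ^ Suc (k x) else 0)" for x
  obtain F where F: "finite F" "(1/2) ^ Suc m \<le> sum h F"
    using exists_finite_sum_ge_half_mass[OF nonneg sum, of h] k nonneg
    by (fastforce simp: h_def)
  define P where "P = {x \<in> F. 0 < r x}"
  have "(\<Sum>x\<in>P. (1/2) ^ Suc (k x)) = sum h F"
    unfolding P_def h_def using F(1) by (rule sum.inter_filter)
  then have "(1/2) ^ Suc m \<le> (\<Sum>x\<in>P. (1/2::real) ^ Suc (k x))"
    using F(2) by simp
  moreover have "finite P" using F(1) by (simp add: P_def)
  moreover have "(1/2) ^ Suc (k x) \<le> r x \<and> Suc m \<le> Suc (k x)" if "x \<in> P" for x
  proof -
    have "0 < r x" using that by (simp add: P_def)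
    then have "(1/2) ^ Suc (k x) \<le> r x" using k by blast
    moreover from this have "(1/2::real) ^ Suc (k x) < (1/2) ^ Suc m"
      using small[of x] by linarith
    ultimately show ?thesis by simp
  qed
  ultimately show ?thesis by (intro exI[of _ P] exI[of _ "\<lambda>x. Suc (k x)"]) simp
qed

lemma exists_dyadic_minorant:
  fixes r :: "'a \<Rightarrow> real"
  assumes nonneg: "\<And>x. 0 \<le> r x" and sum: "(r has_sum (1/2) ^ m) UNIV"
  shows "\<exists>s. (\<forall>x. zero_or_half_power (s x) \<and> s x \<le> r x) \<and> (s has_sum (1/2) ^ Suc m) UNIV"
proof (cases "\<exists>x0. (1/2) ^ Suc m \<le> r x0")
  case True
  then obtain x0 where x0: "(1/2) ^ Suc m \<le> r x0" ..
  define s where "s x = (if x = x0 then (1/2::real) ^ Suc m else 0)" for x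
  have "(s has_sum (1/2) ^ Suc m) UNIV"
    by (rule has_sum_finite_neutralI[of "{x0}"]) (auto simp: s_def)
  moreover have "zero_or_half_power (s x) \<and> s x \<le> r x" for x
    using x0 nonneg[of x] unfolding s_def by (simp del: power_Suc)
  ultimately show ?thesis by blast
next
  case False
  then obtain F n where F: "finite F" "\<And>x. x \<in> F \<Longrightarrow> (1/2) ^ n x \<le> r x \<and> Suc m \<le> n x"
    and mass: "(1/2) ^ Suc m \<le> (\<Sum>x\<in>F. (1/2::real) ^ n x)"
    using exists_finite_half_power_minorant[OF nonneg sum] by (meson not_le)
  then obtain G where G: "G \<subseteq> F" "(\<Sum>x\<in>G. (1/2::real) ^ n x) = (1/2) ^ Suc m"
    using subset_sum_eq_half_power[OF F(1), of "Suc m" n] by blast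
  define s where "s x = (if x \<in> G then (1/2::real) ^ n x else 0)" for x
  have "finite G" using G(1) F(1) finite_subset by blast
  then have "(s has_sum (1/2) ^ Suc m) UNIV"
    by (intro has_sum_finite_neutralI[of G]) (use G in \<open>auto simp: s_def\<close>)
  moreover have "zero_or_half_power (s x) \<and> s x \<le> r x" for x
    using G(1) F(2)[of x] nonneg[of x] by (auto simp: s_def)
  ultimately show ?thesis by blast
qed

lemma has_sum_nonneg_le:
  fixes f :: "'a \<Rightarrow> real"
  assumes "(f has_sum a) A" and "\<And>y. y \<in> A \<Longrightarrow> 0 \<le> f y" and "x \<in> A"
  shows "f x \<le> a"
proof (rule has_sum_mono_neutral)
  show "((\<lambda>_. f x) has_sum f x) {x}" by (rule has_sum_finiteI) simp_all
qed (use assms in auto)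

lemma exists_dyadic_decomposition:
  fixes p :: "'a \<Rightarrow> real"
  assumes nonneg: "\<And>x. 0 \<le> p x" and sum: "(p has_sum 1) UNIV"
  shows "\<exists>S. (\<forall>n x. zero_or_half_power (S n x)) \<and> (\<forall>n. (S n has_sum (1/2) ^ Suc n) UNIV)
             \<and> (\<forall>x. (\<lambda>n. S n x) sums p x)"
proof -
  define pick where "pick r m = (SOME s. (\<forall>x. zero_or_half_power (s x) \<and> s x \<le> r x)
                                      \<and> (s has_sum (1/2) ^ Suc m) UNIV)"
    for r :: "'a \<Rightarrow> real" and m
  have pick: "(\<forall>x. zero_or_half_power (pick r m x) \<and> pick r m x \<le> r x)
              \<and> (pick r m has_sum (1/2) ^ Suc m) UNIV"
    if "\<And>x. 0 \<le> r x" "(r has_sum (1/2) ^ m) UNIV" for r m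
    unfolding pick_def by (rule someI_ex[OF exists_dyadic_minorant[OF that]])
  define R where "R = rec_nat p (\<lambda>n R x. R x - pick R n x)"
  define S where "S n = pick (R n) n" for n
  have R_0: "R 0 = p" and R_Suc: "R (Suc n) = (\<lambda>x. R n x - S n x)" for n
    by (simp_all add: R_def S_def)
  have R: "(\<forall>x. 0 \<le> R n x) \<and> (R n has_sum (1/2) ^ n) UNIV" for n
  proof (induction n)
    case 0
    show ?case using nonneg sum by (simp add: R_0)
  next
    case (Suc n)
    then have S_n: "(\<forall>x. zero_or_half_power (S n x) \<and> S n x \<le> R n x)
                    \<and> (S n has_sum (1/2) ^ Suc n) UNIV"
      unfolding S_def by (intro pick) auto
    then have "((\<lambda>x. R n x + - S n x) has_sum ((1/2) ^ n + - ((1/2) ^ Suc n))) UNIV"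
      using Suc by (intro has_sum_add has_sum_uminusI) auto
    then show ?case using S_n by (simp add: R_Suc)
  qed
  have S: "zero_or_half_power (S n x)" "(S n has_sum (1/2) ^ Suc n) UNIV" for n x
    using pick[of "R n" n] R[of n] by (simp_all add: S_def)
  have R_eq: "R n x = p x - (\<Sum>i<n. S i x)" for n x
    by (induction n) (simp_all add: R_0 R_Suc)
  have R_le: "R n x \<le> (1/2) ^ n" for n x
    by (rule has_sum_nonneg_le[where A = UNIV]) (use R[of n] in auto)
  have R_lim: "(\<lambda>n. R n x) \<longlonglongrightarrow> 0" for x
  proof (rule tendsto_sandwich[of "\<lambda>_. 0" _ _ "\<lambda>n. (1/2::real) ^ n"])
    show "(\<lambda>n. (1/2::real) ^ n) \<longlonglongrightarrow> 0" by (rule LIMSEQ_realpow_zero) auto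
  qed (use R R_le in auto)
  have "(\<lambda>n. S n x) sums p x" for x
  proof -
    have "(\<lambda>n. p x - R n x) \<longlonglongrightarrow> p x - 0" by (intro tendsto_diff tendsto_const R_lim)
    then show ?thesis unfolding sums_def by (simp add: R_eq)
  qed
  then show ?thesis using S by blast
qed

lemma has_sum_infsetsum:
  assumes "Infinite_Set_Sum.abs_summable_on f A"
  shows "(f has_sum infsetsum f A) A"
proof -
  have "f summable_on A"
    using assms by (simp add: abs_summable_summable flip: abs_summable_equivalent)
  then show ?thesis by (simp add: infsetsum_infsum[OF assms])
qed

lemma has_sum_pmf: "(pmf p has_sum 1) UNIV"
  using has_sum_infsetsum[OF pmf_abs_summable, of p UNIV] by (simp add: infsetsum_pmf_eq_1)

lemma has_sum_pmf_bind: "((\<lambda>x. pmf p x * pmf (f x) y) has_sum pmf (bind_pmf p f) y) UNIV"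
proof -
  have "Infinite_Set_Sum.abs_summable_on (\<lambda>x. pmf p x * pmf (f x) y) UNIV"
    by (rule Infinite_Set_Sum.abs_summable_on_comparison_test'[OF pmf_abs_summable[of p]])
       (simp add: mult_left_le pmf_le_1)
  then show ?thesis
    using has_sum_infsetsum by (simp add: pmf_bind pmf_expectation_eq_infsetsum)
qed

lemma pmf_joint_pmf: "pmf (joint_pmf p K) (x, w) = pmf p x * pmf (K x) w"
proof -
  have "pmf (map_pmf (Pair x') (K x')) (x, w) = (if x' = x then pmf (K x) w else 0)" for x'
  proof (cases "x' = x")
    case True
    then show ?thesis using pmf_map_inj'[of "Pair x" "K x" w] by (simp add: inj_on_def)
  next
    case False
    then show ?thesis by (auto intro: pmf_map_outside)
  qed
  then have "((\<lambda>x'. pmf p x' * pmf (map_pmf (Pair x') (K x')) (x, w)) has_sum pmf p x * pmf (K x) w) UNIV"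
    by (intro has_sum_finite_neutralI[of "{x}"]) auto
  then show ?thesis
    using has_sum_unique[OF has_sum_pmf_bind] by (simp add: joint_pmf_def)
qed

lemma has_sum_pmf_joint_pmf:
  "((\<lambda>x. pmf (joint_pmf p K) (x, w)) has_sum pmf (map_pmf snd (joint_pmf p K)) w) UNIV"
proof -
  have "map_pmf snd (joint_pmf p K) = bind_pmf p K"
    by (simp add: joint_pmf_def map_bind_pmf map_pmf_comp)
  then show ?thesis using has_sum_pmf_bind by (simp add: pmf_joint_pmf)
qed

lemma pmf_cond_X_given_W:
  assumes "pmf (map_pmf snd J) w \<noteq> 0"
  shows "pmf (cond_X_given_W J w) x = pmf J (x, w) / pmf (map_pmf snd J) w"
proof -
  let ?W = "{z. snd z = w}"
  have W: "measure J ?W = pmf (map_pmf snd J) w"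
    by (simp add: pmf_map vimage_def)
  then have "set_pmf J \<inter> ?W \<noteq> {}"
    using assms measure_Int_set_pmf[of J ?W] by (auto simp: Int_commute)
  then have "pmf (cond_X_given_W J w) x = measure (cond_pmf J ?W) {(x, w)}"
    unfolding cond_X_given_W_def pmf_map
    by (intro measure_eq_AE) (auto simp: AE_measure_pmf_iff)
  also have "\<dots> = pmf J (x, w) / measure J ?W"
    using \<open>set_pmf J \<inter> ?W \<noteq> {}\<close> by (simp add: measure_pmf_single pmf_cond)
  finally show ?thesis by (simp add: W)
qed

lemma pmf_embed_pmf_of_sums:
  fixes f :: "nat \<Rightarrow> real"
  assumes nonneg: "\<And>n. 0 \<le> f n" and sums: "f sums 1"
  shows "pmf (embed_pmf f) n = f n"
proof (rule pmf_embed_pmf[OF nonneg])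
  have "(\<integral>\<^sup>+n. ennreal (f n) \<partial>count_space UNIV) = (\<Sum>n. ennreal (f n))"
    by (rule nn_integral_count_space_nat)
  also have "\<dots> = ennreal (\<Sum>n. f n)"
    by (rule suminf_ennreal2[OF nonneg sums_summable[OF sums]])
  finally show "(\<integral>\<^sup>+n. ennreal (f n) \<partial>count_space UNIV) = 1"
    using sums_unique[OF sums] by simp
qed

lemma exists_channel_with_joint_pmf:
  fixes p :: "'a pmf" and q :: "'a \<Rightarrow> nat \<Rightarrow> real"
  assumes nonneg: "\<And>x w. 0 \<le> q x w" and sums: "\<And>x. q x sums pmf p x"
  shows "\<exists>K. \<forall>x w. pmf (joint_pmf p K) (x, w) = q x w"
proof -
  define K where "K x = (if pmf p x = 0 then return_pmf 0 else embed_pmf (\<lambda>w. q x w / pmf p x))"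
    for x
  have "pmf (joint_pmf p K) (x, w) = q x w" for x w
  proof (cases "pmf p x = 0")
    case True
    have "q x w \<le> pmf p x"
      using sum_le_suminf[OF sums_summable[OF sums], of "{w}"] nonneg sums_unique[OF sums[of x]]
      by simp
    then show ?thesis using True nonneg[of x w] by (simp add: pmf_joint_pmf)
  next
    case False
    have "(\<lambda>w. q x w / pmf p x) sums (pmf p x / pmf p x)"
      by (intro sums_divide sums)
    then have "pmf (K x) w = q x w / pmf p x"
      using False nonneg by (simp add: K_def pmf_embed_pmf_of_sums)
    then show ?thesis using False by (simp add: pmf_joint_pmf)
  qed
  then show ?thesis by blast
qed

lemma dyadic_pmf_cond_X_given_W:
  assumes marginal: "pmf (map_pmf snd J) w = (1/2) ^ w"
    and joint: "\<And>x. zero_or_half_power (pmf J (x, w))"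
  shows "dyadic_pmf (cond_X_given_W J w)"
  unfolding dyadic_pmf_def
proof
  fix x assume x: "x \<in> set_pmf (cond_X_given_W J w)"
  have cond: "pmf (cond_X_given_W J w) x = pmf J (x, w) * 2 ^ w"
    using pmf_cond_X_given_W[of J w x] marginal by (simp add: power_one_over)
  then have "pmf J (x, w) \<noteq> 0" using x by (simp add: set_pmf_iff)
  then obtain k where "pmf J (x, w) = (1/2) ^ k"
    using joint[of x] by (auto simp: zero_or_half_power_def)
  then have "pmf (cond_X_given_W J w) x = 2 powi (int w - int k)"
    by (simp add: cond power_int_diff power_one_over)
  then show "\<exists>k::int. pmf (cond_X_given_W J w) x = 2 powi k" ..
qed

theorem lemma1:
  fixes p :: "'a pmf"
  shows "\<exists>K :: 'a \<Rightarrow> nat pmf.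
           (\<forall>w::nat. pmf (map_pmf snd (joint_pmf p K)) w = (if w \<ge> 1 then (1/2) ^ w else 0))
         \<and> (\<forall>w::nat. w \<ge> 1 \<longrightarrow> dyadic_pmf (cond_X_given_W (joint_pmf p K) w))"
proof -
  obtain S where S_dyadic: "\<And>n x. zero_or_half_power (S n x)"
    and S_sum: "\<And>n. (S n has_sum (1/2) ^ Suc n) UNIV" and S_sums: "\<And>x. (\<lambda>n. S n x) sums pmf p x"
    using exists_dyadic_decomposition[OF pmf_nonneg has_sum_pmf] by blast
  define q where "q x = (\<lambda>w. case w of 0 \<Rightarrow> 0 | Suc n \<Rightarrow> S n x)" for x
  have "0 \<le> q x w" for x w
    using S_dyadic zero_or_half_power_nonneg by (simp add: q_def split: nat.split)
  moreover have "q x sums pmf p x" for x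
    using sums_Suc_imp[of "q x"] S_sums[of x] by (simp add: q_def)
  ultimately obtain K where K: "\<And>x w. pmf (joint_pmf p K) (x, w) = q x w"
    using exists_channel_with_joint_pmf by blast
  let ?J = "joint_pmf p K"
  have marginal: "pmf (map_pmf snd ?J) w = (if w \<ge> 1 then (1/2) ^ w else 0)" for w
  proof -
    have "((\<lambda>x. pmf ?J (x, w)) has_sum (if w \<ge> 1 then (1/2) ^ w else 0)) UNIV"
      using S_sum by (cases w) (simp_all add: K q_def)
    then show ?thesis by (rule has_sum_unique[OF has_sum_pmf_joint_pmf])
  qed
  have "dyadic_pmf (cond_X_given_W ?J w)" if "w \<ge> 1" for w
  proof (rule dyadic_pmf_cond_X_given_W)
    show "pmf (map_pmf snd ?J) w = (1/2) ^ w" using marginal that by simp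
    show "zero_or_half_power (pmf ?J (x, w))" for x
      using S_dyadic that by (cases w) (simp_all add: K q_def)
  qed
  with marginal show ?thesis by blast
qed

end
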